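(* Let $n,d\ge 2$, $\mathcal T=\sum_{k=1}^{n+1}\mathbf v_k^{\otimes d}$, let $0\le s_k\le 1$ for $1\le k\le n-1$ and $s_n:=1-\sum_{k=1}^{n-1}s_k$. Then $\big(\sum_{k=1}^n s_k\mathbf v_k,\mu\big)$ is an eigenpair of $\mathcal T$ if and only if $$\mu s_k=\frac{1}{n^{d-1}}\Big(\big((n+1)s_k-1\big)^{d-1}-(-1)^{d-1}\Big),\qquad 1\le k\le n.$$
   Context: Simplex frame: for $n\ge 2$, $\mathbf v_k=\sqrt{1+\frac1n}\,\mathbf e_k-\frac{1}{n^{3/2}}(\sqrt{n+1}-1)\mathbf 1_n$ ($1\le k\le n$), $\mathbf v_{n+1}=-\frac{1}{\sqrt n}\mathbf 1_n$, where $\mathbf e_k$ are unit vectors of $\mathbb R^n$ and $\mathbf 1_n=(1,\ldots,1)^\top$; $\|\mathbf v_k\|=1$, $\langle\mathbf v_k,\mathbf v_j\rangle=-\frac1n$ ($k\ne j$), $\sum_k\mathbf v_k=\mathbf 0$. $\mathcal T=\sum_{k=1}^{n+1}\mathbf v_k^{\otimes d}$, $\mathcal T\cdot\mathbf v^{d-1}=\sum_{k}\langle\mathbf v,\mathbf v_k\rangle^{d-1}\mathbf v_k$; an eigenpair is $(\mathbf v,\mu)$ with $\mathbf v\neq\mathbf 0$ and $\mathcal T\cdot\mathbf v^{d-1}=\mu\mathbf v$. *)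

theory Defs
  imports Complex_Main
begin

text \<open>Vectors of R^n are represented as functions nat => real, of which only the
  components 0..n-1 matter. Indices are 0-based: the paper's e_k, v_k (1 <= k <= n)
  are index k-1 here, and v_{n+1} is index n.\<close>

definition sinner :: "nat \<Rightarrow> (nat \<Rightarrow> real) \<Rightarrow> (nat \<Rightarrow> real) \<Rightarrow> real" where
  "sinner n x y = (\<Sum>i<n. x i * y i)"

definition sframe :: "nat \<Rightarrow> nat \<Rightarrow> nat \<Rightarrow> real" where
  "sframe n k i =
     (if i < n then
        (if k < n then sqrt (1 + 1 / real n) * (if i = k then 1 else 0)
                       - (1 / (real n powr (3/2))) * (sqrt (real n + 1) - 1)
         else - 1 / sqrt (real n))
      else 0)"

text \<open>T . v^(d-1) = sum_k <v, v_k>^(d-1) v_k for T = sum_k v_k^{(x) d}.\<close>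
definition sframe_apply :: "nat \<Rightarrow> nat \<Rightarrow> (nat \<Rightarrow> real) \<Rightarrow> (nat \<Rightarrow> real)" where
  "sframe_apply n d v = (\<lambda>i. \<Sum>k\<le>n. (sinner n v (sframe n k)) ^ (d - 1) * sframe n k i)"

definition sframe_eigenpair :: "nat \<Rightarrow> nat \<Rightarrow> (nat \<Rightarrow> real) \<Rightarrow> real \<Rightarrow> bool" where
  "sframe_eigenpair n d v \<mu> \<longleftrightarrow>
     (\<exists>i<n. v i \<noteq> 0) \<and> (\<forall>i<n. sframe_apply n d v i = \<mu> * v i)"

end

theory Submission
  imports Defs
begin

text \<open>Let v = s_1 v_1 + ... + s_n v_n with s_1 + ... + s_n = 1. The Gram relations
  <v_j, v_k> = \<delta>_jk (1 + 1/n) - 1/n give <v, v_k> = ((n+1) s_k - 1)/n for k \<le> n and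
  <v, v_{n+1}> = -1/n. Eliminating v_{n+1} = -(v_1 + ... + v_n), the eigen equation becomes
  \<Sum>_{k \<le> n} (<v, v_k>^(d-1) - <v, v_{n+1}>^(d-1) - \<mu> s_k) v_k = 0, and since v_1, ..., v_n
  are linearly independent every coefficient vanishes.\<close>

definition sframe_scale :: "nat \<Rightarrow> real" where
  "sframe_scale n = sqrt (1 + 1 / real n)"

definition sframe_shift :: "nat \<Rightarrow> real" where
  "sframe_shift n = (1 / (real n powr (3/2))) * (sqrt (real n + 1) - 1)"

lemma sframe_less:
  "i < n \<Longrightarrow> k < n \<Longrightarrow>
     sframe n k i = sframe_scale n * (if i = k then 1 else 0) - sframe_shift n"
  by (simp add: sframe_def sframe_scale_def sframe_shift_def)

lemma sframe_last: "i < n \<Longrightarrow> sframe n n i = - 1 / sqrt (real n)"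
  by (simp add: sframe_def)

lemma sframe_commute: "i < n \<Longrightarrow> k < n \<Longrightarrow> sframe n k i = sframe n i k"
  by (simp add: sframe_less)

lemma sum_mult_sframe:
  assumes "i < n"
  shows "(\<Sum>k<n. c k * sframe n k i) = sframe_scale n * c i - sframe_shift n * sum c {..<n}"
proof -
  have "(\<Sum>k<n. c k * sframe n k i)
      = (\<Sum>k<n. sframe_scale n * (if k = i then c k else 0) - sframe_shift n * c k)"
    using assms by (intro sum.cong) (auto simp: sframe_less algebra_simps)
  also have "\<dots> = sframe_scale n * c i - sframe_shift n * sum c {..<n}"
    using assms by (simp add: sum_subtractf sum_distrib_left[symmetric])
  finally show ?thesis .
qed

lemma sinner_sframe:
  assumes "k < n"
  shows "sinner n f (sframe n k) = sframe_scale n * f k - sframe_shift n * sum f {..<n}"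
proof -
  have "sinner n f (sframe n k) = (\<Sum>i<n. f i * sframe n i k)"
    unfolding sinner_def using assms by (intro sum.cong) (auto simp: sframe_commute)
  then show ?thesis using sum_mult_sframe[OF assms] by simp
qed

lemma sframe_scale_shift:
  assumes "n > 0"
  shows "sframe_scale n - real n * sframe_shift n = 1 / sqrt (real n)"
    and "sframe_scale n ^ 2 = (real n + 1) / real n"
    and "real n * sframe_shift n ^ 2 - 2 * sframe_scale n * sframe_shift n = - 1 / real n"
proof -
  define r where "r = sqrt (real n)"
  define t where "t = sqrt (real n + 1)"
  have r: "r > 0" "real n = r * r" using assms by (auto simp: r_def)
  have t: "t * t = r * r + 1" using r by (simp add: t_def)
  have "real n powr (3/2) = real n powr 1 * real n powr (1/2)"
    unfolding powr_add[symmetric] by simp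
  then have shift: "sframe_shift n = (t - 1) / (r * r * r)"
    using assms by (simp add: sframe_shift_def powr_half_sqrt r_def t_def r(2)[symmetric])
  have "1 + 1 / real n = (real n + 1) / real n" using assms by (simp add: field_simps)
  then have scale: "sframe_scale n = t / r"
    by (simp add: sframe_scale_def real_sqrt_divide r_def t_def)
  show "sframe_scale n - real n * sframe_shift n = 1 / sqrt (real n)"
    using r unfolding scale shift r_def[symmetric] by (simp add: field_simps)
  show "sframe_scale n ^ 2 = (real n + 1) / real n"
    using r t unfolding scale by (simp add: power2_eq_square)
  show "real n * sframe_shift n ^ 2 - 2 * sframe_scale n * sframe_shift n = - 1 / real n"
    using r t unfolding scale shift by (simp add: field_simps power2_eq_square) algebra
qed

lemma sum_sframe_less:
  assumes "n > 0" "i < n"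
  shows "(\<Sum>k<n. sframe n k i) = 1 / sqrt (real n)"
  using sum_mult_sframe[OF assms(2), of "\<lambda>_. 1"] sframe_scale_shift(1)[OF assms(1)]
  by (simp add: mult.commute)

lemma sum_sframe: "n > 0 \<Longrightarrow> i < n \<Longrightarrow> (\<Sum>k\<le>n. sframe n k i) = 0"
  by (simp add: lessThan_Suc_atMost[symmetric] sum_sframe_less sframe_last)

lemma sframe_gram:
  assumes "n > 0" "j \<le> n" "k \<le> n"
  shows "sinner n (sframe n j) (sframe n k) = (if j = k then 1 else - 1 / real n)"
proof -
  have sqrt_n: "sqrt (real n) * sqrt (real n) = real n" by simp
  have row_sum: "(\<Sum>i<n. sframe n j i) = 1 / sqrt (real n)" if "j < n" for j
  proof -
    have "(\<Sum>i<n. sframe n j i) = (\<Sum>i<n. sframe n i j)"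
      using that by (intro sum.cong) (auto simp: sframe_commute)
    then show ?thesis using sum_sframe_less[OF assms(1) that] by simp
  qed
  have less_less: "sinner n (sframe n j) (sframe n k) = (if j = k then 1 else - 1 / real n)"
    if "j < n" "k < n" for j k
  proof -
    have "sinner n (sframe n j) (sframe n k)
        = sframe_scale n ^ 2 * (if j = k then 1 else 0)
          + (real n * sframe_shift n ^ 2 - 2 * sframe_scale n * sframe_shift n)"
      unfolding sinner_sframe[OF that(2)] row_sum[OF that(1)] sframe_less[OF that(2,1)]
        sframe_scale_shift(1)[OF assms(1), symmetric]
      by (simp add: power2_eq_square algebra_simps)
    also have "\<dots> = (real n + 1) / real n * (if j = k then 1 else 0) - 1 / real n"
      unfolding sframe_scale_shift(2,3)[OF assms(1)] by simp
    finally show ?thesis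
      using assms(1) by (cases "j = k") (simp_all add: field_simps)
  qed
  have less_last: "sinner n (sframe n j) (sframe n n) = - 1 / real n" if "j < n" for j
  proof -
    have "sinner n (sframe n j) (sframe n n) = (\<Sum>i<n. sframe n j i) * (- 1 / sqrt (real n))"
      unfolding sinner_def sum_distrib_right by (simp add: sframe_last)
    then show ?thesis using that sqrt_n by (simp add: row_sum)
  qed
  have last_last: "sinner n (sframe n n) (sframe n n) = 1"
    using assms(1) sqrt_n by (simp add: sinner_def sframe_last)
  have sinner_commute: "sinner n x y = sinner n y x" for x y
    unfolding sinner_def by (simp add: mult.commute)
  show ?thesis
    using assms(2,3) less_less less_last last_last sinner_commute
    by (cases "j < n"; cases "k < n") auto
qed

lemma sframe_independent:
  assumes "n > 0"
  shows "(\<forall>i<n. (\<Sum>k<n. c k * sframe n k i) = 0) \<longleftrightarrow> (\<forall>k<n. c k = 0)"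
proof
  assume comb: "\<forall>i<n. (\<Sum>k<n. c k * sframe n k i) = 0"
  then have coord: "sframe_scale n * c i = sframe_shift n * sum c {..<n}" if "i < n" for i
    using that by (simp add: sum_mult_sframe)
  have "sframe_scale n * sum c {..<n} = (\<Sum>i<n. sframe_scale n * c i)"
    by (simp add: sum_distrib_left)
  also have "\<dots> = real n * sframe_shift n * sum c {..<n}"
    using coord by simp
  finally have "sframe_scale n * sum c {..<n} = real n * sframe_shift n * sum c {..<n}" .
  then have "(sframe_scale n - real n * sframe_shift n) * sum c {..<n} = 0"
    by (simp add: algebra_simps)
  then have "sum c {..<n} = 0"
    using assms by (simp add: sframe_scale_shift(1))
  moreover have "sframe_scale n > 0"
    using assms by (simp add: sframe_scale_def add_pos_nonneg)
  ultimately show "\<forall>k<n. c k = 0"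
    using coord by simp
qed simp

lemma sinner_sum_left:
  "sinner n (\<lambda>i. \<Sum>j\<in>J. s j * x j i) y = (\<Sum>j\<in>J. s j * sinner n (x j) y)"
  unfolding sinner_def sum_distrib_left sum_distrib_right
  by (subst sum.swap) (simp add: mult.assoc)

lemma sinner_combination_sframe:
  assumes "n > 0"
  shows "k < n \<Longrightarrow> sinner n (\<lambda>i. \<Sum>j<n. s j * sframe n j i) (sframe n k)
           = ((real n + 1) * s k - sum s {..<n}) / real n"
    and "sinner n (\<lambda>i. \<Sum>j<n. s j * sframe n j i) (sframe n n) = - sum s {..<n} / real n"
proof -
  assume "k < n"
  then have "sinner n (\<lambda>i. \<Sum>j<n. s j * sframe n j i) (sframe n k)
      = (\<Sum>j<n. (if j = k then s j * (1 + 1 / real n) else 0) - s j / real n)"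
    unfolding sinner_sum_left using assms
    by (intro sum.cong) (auto simp: sframe_gram field_simps)
  also have "\<dots> = s k * (1 + 1 / real n) - sum s {..<n} / real n"
    using \<open>k < n\<close> by (simp add: sum_subtractf sum_divide_distrib)
  also have "\<dots> = ((real n + 1) * s k - sum s {..<n}) / real n"
    using assms by (simp add: field_simps)
  finally show "sinner n (\<lambda>i. \<Sum>j<n. s j * sframe n j i) (sframe n k)
      = ((real n + 1) * s k - sum s {..<n}) / real n" .
next
  show "sinner n (\<lambda>i. \<Sum>j<n. s j * sframe n j i) (sframe n n) = - sum s {..<n} / real n"
    unfolding sinner_sum_left using assms
    by (simp add: sframe_gram sum_negf sum_divide_distrib[symmetric])
qed

lemma sum_atMost_mult_sframe:
  assumes "n > 0" "i < n"
  shows "(\<Sum>k\<le>n. q k * sframe n k i) = (\<Sum>k<n. (q k - q n) * sframe n k i)"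
proof -
  have "sframe n n i = - (\<Sum>k<n. sframe n k i)"
    using sum_sframe[OF assms] by (simp add: lessThan_Suc_atMost[symmetric] add_eq_0_iff)
  then have "q n * sframe n n i = - (\<Sum>k<n. q n * sframe n k i)"
    by (simp add: sum_distrib_left)
  then show ?thesis
    by (simp add: lessThan_Suc_atMost[symmetric] left_diff_distrib sum_subtractf)
qed

theorem mainTheorem3:
  fixes n d :: nat and s :: "nat \<Rightarrow> real" and \<mu> :: real
  assumes "n \<ge> 2" and "d \<ge> 2"
    and "\<And>k. k < n - 1 \<Longrightarrow> 0 \<le> s k \<and> s k \<le> 1"
    and "s (n - 1) = 1 - (\<Sum>k<n - 1. s k)"
  shows "sframe_eigenpair n d (\<lambda>i. \<Sum>k<n. s k * sframe n k i) \<mu> \<longleftrightarrow>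
         (\<forall>k<n. \<mu> * s k =
            (1 / real n ^ (d - 1)) * (((real n + 1) * s k - 1) ^ (d - 1) - (-1) ^ (d - 1)))"
proof -
  define v where "v = (\<lambda>i. \<Sum>k<n. s k * sframe n k i)"
  define p where "p = (\<lambda>k. sinner n v (sframe n k) ^ (d - 1))"
  have n: "n > 0" using assms(1) by simp
  have sum_s: "sum s {..<n} = 1"
    using assms(4) n by (metis add_diff_cancel_left' diff_add_cancel Suc_pred' sum.lessThan_Suc)
  have v_nonzero: "\<exists>i<n. v i \<noteq> 0"
    using sframe_independent[OF n, of s] sum_s unfolding v_def by force
  have eigen_residual: "sframe_apply n d v i - \<mu> * v i
      = (\<Sum>k<n. (p k - p n - \<mu> * s k) * sframe n k i)" if "i < n" for i
    using sum_atMost_mult_sframe[OF n that, of p] unfolding sframe_apply_def p_def v_def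
    by (simp add: sum_distrib_left sum_subtractf left_diff_distrib mult.assoc)
  have coefficient: "p k - p n = (1 / real n ^ (d - 1)) *
      (((real n + 1) * s k - 1) ^ (d - 1) - (-1) ^ (d - 1))" if "k < n" for k
    unfolding p_def v_def sinner_combination_sframe(1)[OF n that] sinner_combination_sframe(2)[OF n]
    by (simp only: sum_s power_divide) (simp add: diff_divide_distrib)
  have "sframe_eigenpair n d v \<mu> \<longleftrightarrow> (\<forall>i<n. sframe_apply n d v i - \<mu> * v i = 0)"
    unfolding sframe_eigenpair_def using v_nonzero by simp
  also have "\<dots> \<longleftrightarrow> (\<forall>k<n. p k - p n - \<mu> * s k = 0)"
    using sframe_independent[OF n] by (simp add: eigen_residual)
  finally show ?thesis
    unfolding v_def[symmetric] using coefficient by auto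
qed

end
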